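(* Let $N,k$ be positive integers and $\lambda$ a partition with $l(\lambda)\le N$. Then: (1) $c'_\lambda(q,t)$ is nonzero at $q^kt^N=1$. (2) $c_\lambda(q,t)$ is zero at $q^kt^N=1$ if and only if $l(\lambda^t)>k$ and $l(\overline{\lambda}^t)\le k$. Moreover, in that case exactly one of the factors $1-q^{a(s)}t^{l(s)+1}$, $s\in\lambda$, becomes zero at $q^kt^N=1$ (the order of vanishing is $1$).
   Context: Partitions $\lambda=(\lambda_1\ge\lambda_2\ge\cdots)$ are identified with Young diagrams $\{(i,j): i\ge1,\ 1\le j\le\lambda_i\}$; $\lambda^t$ is the transpose partition, $l(\lambda)$ the number of nonzero parts (so $l(\lambda^t)=\lambda_1$), $|\lambda|=\sum_i\lambda_i$. For a box $s=(i,j)\in\lambda$: arm $a(s)=\lambda_i-j$, leg $l(s)=\lambda^t_j-i$. Set $c_\lambda(q,t)=\prod_{s\in\lambda}(1-q^{a(s)}t^{l(s)+1})$ and $c'_\lambda(q,t)=\prod_{s\in\lambda}(1-q^{a(s)+1}t^{l(s)})$. For a partition $\lambda$ with $l(\lambda)\le N$, $\overline{\lambda}$ denotes the partition $(\lambda_1-\lambda_N,\lambda_2-\lambda_N,\dots,\lambda_{N-1}-\lambda_N)$ obtained by removing all columns of height $N$ (so $l(\overline\lambda)<N$). Specialization at $q^kt^N=1$: let $m=\gcd(k,N)$, fix a primitive $m$-th root of unity $\omega$ and $\omega_1\in\mathbb C$ with $\omega_1^{N/m}=\omega$. Let $v$ be an indeterminate and consider the ring homomorphism $\mathbb Z[q^{\pm1},t^{\pm1}]\to\mathbb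 C(v)$, $q\mapsto v^N$, $t\mapsto v^{-k}\omega_1$. An element is said to be zero (resp. nonzero) at $q^kt^N=1$ if its image under this homomorphism is zero (resp. nonzero). *)

theory Defs
  imports Complex_Main "HOL-Computational_Algebra.Polynomial" "HOL-Computational_Algebra.Fraction_Field"
begin

definition is_partition :: "nat list \<Rightarrow> bool" where
  "is_partition lam \<longleftrightarrow> sorted_wrt (\<ge>) lam \<and> 0 \<notin> set lam"

(* lambda_i, 1-based, zero beyond the length *)
definition part :: "nat list \<Rightarrow> nat \<Rightarrow> nat" where
  "part lam i = (if 1 \<le> i \<and> i \<le> length lam then lam ! (i - 1) else 0)"

definition diagram :: "nat list \<Rightarrow> (nat \<times> nat) set" where
  "diagram lam = {(i, j). 1 \<le> i \<and> 1 \<le> j \<and> j \<le> part lam i}"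

definition conjpart :: "nat list \<Rightarrow> nat \<Rightarrow> nat" where
  "conjpart lam j = length (filter (\<lambda>x. j \<le> x) lam)"

(* the transpose partition lambda^t, as a list of its nonzero parts *)
definition ptrans :: "nat list \<Rightarrow> nat list" where
  "ptrans lam = map (conjpart lam) [1..<Suc (part lam 1)]"

definition arm :: "nat list \<Rightarrow> nat \<times> nat \<Rightarrow> nat" where
  "arm lam s = part lam (fst s) - snd s"

definition leg :: "nat list \<Rightarrow> nat \<times> nat \<Rightarrow> nat" where
  "leg lam s = conjpart lam (snd s) - fst s"

definition c_lam :: "nat list \<Rightarrow> 'a::comm_ring_1 \<Rightarrow> 'a \<Rightarrow> 'a" where
  "c_lam lam q t = (\<Prod>s\<in>diagram lam. 1 - q ^ arm lam s * t ^ (leg lam s + 1))"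

definition c'_lam :: "nat list \<Rightarrow> 'a::comm_ring_1 \<Rightarrow> 'a \<Rightarrow> 'a" where
  "c'_lam lam q t = (\<Prod>s\<in>diagram lam. 1 - q ^ (arm lam s + 1) * t ^ leg lam s)"

(* overline lambda: remove all columns of height N (nonzero parts of
   (lambda_1 - lambda_N, ..., lambda_{N-1} - lambda_N)) *)
definition bar :: "nat \<Rightarrow> nat list \<Rightarrow> nat list" where
  "bar N lam = filter (\<lambda>x. x \<noteq> 0) (map (\<lambda>i. part lam i - part lam N) [1..<N])"

definition primitive_root :: "nat \<Rightarrow> complex \<Rightarrow> bool" where
  "primitive_root m w \<longleftrightarrow> w ^ m = 1 \<and> (\<forall>d. 0 < d \<and> d < m \<longrightarrow> w ^ d \<noteq> 1)"

(* The field C(v) is complex poly fract; v is the indeterminate *)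
definition var_v :: "complex poly fract" where
  "var_v = Fract [:0, 1:] 1"

definition specQ :: "nat \<Rightarrow> complex poly fract" where
  "specQ N = var_v ^ N"

definition specT :: "nat \<Rightarrow> complex \<Rightarrow> complex poly fract" where
  "specT k w1 = inverse var_v ^ k * Fract [:w1:] 1"

end

theory Submission
  imports Defs
begin

(* Under q := v^N, t := v^(-k) * omega1 a factor 1 - q^a t^L becomes
   1 - omega1^L v^(N a - k L), which vanishes in C(v) iff N a = k L and omega1^L = 1.
   Since omega1^(N/m) is a primitive m-th root of unity (m = gcd k N), these two
   conditions force N to divide L.  In a partition with at most N rows every leg is
   smaller than N, hence:
   - a factor of c'_lambda (exponents a(s)+1, l(s)) could only vanish with l(s) = 0,
     which forces a(s)+1 = 0; so c'_lambda never vanishes;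
   - a factor of c_lambda (exponents a(s), l(s)+1) vanishes iff l(s)+1 = N and
     a(s) = k, i.e. iff s is the box in row 1 with arm k lying in a column of height N.
   Such a box exists iff lambda_1 > k and lambda_1 - lambda_N <= k, and it is unique. *)

lemma var_v_power: "var_v ^ n = Fract (monom 1 n) 1"
proof (induction n)
  case 0 then show ?case by (simp add: One_fract_def monom_0 one_pCons)
next
  case (Suc n) then show ?case
    by (simp add: var_v_def mult_monom monom_Suc)
qed

lemma Fract_const_power: "Fract [:c:] 1 ^ n = Fract [:c ^ n:] 1"
  by (induction n) (auto simp: One_fract_def one_pCons mult.commute)

lemma var_v_nonzero: "var_v \<noteq> 0"
  by (simp add: var_v_def Zero_fract_def eq_fract)

lemma one_minus_monomial_eq_zero_iff:
  fixes c :: complex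
  shows "1 - var_v ^ A * (inverse var_v ^ B * Fract [:c:] 1) = 0 \<longleftrightarrow> A = B \<and> c = 1"
proof -
  have "1 - var_v ^ A * (inverse var_v ^ B * Fract [:c:] 1) = 0 \<longleftrightarrow>
        var_v ^ B = var_v ^ A * Fract [:c:] 1"
    using var_v_nonzero by (auto simp: field_simps)
  also have "\<dots> \<longleftrightarrow> monom 1 B = monom 1 A * [:c:]"
    by (simp add: var_v_power eq_fract)
  also have "monom 1 A * [:c:] = monom c A"
    using mult_monom[of 1 A c 0] by (simp add: monom_0)
  also have "monom 1 B = monom c A \<longleftrightarrow> A = B \<and> c = 1"
    by (auto simp: monom_eq_iff')
  finally show ?thesis .
qed

lemma spec_factor_eq_zero_iff:
  fixes w :: complex
  shows "1 - specQ N ^ a * specT k w ^ L = 0 \<longleftrightarrow> N * a = k * L \<and> w ^ L = 1"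
proof -
  have "specQ N ^ a * specT k w ^ L
      = var_v ^ (N * a) * (inverse var_v ^ (k * L) * Fract [:w ^ L:] 1)"
    by (simp add: specQ_def specT_def power_mult_distrib Fract_const_power flip: power_mult)
  then show ?thesis using one_minus_monomial_eq_zero_iff by simp
qed

lemma primitive_root_pow_eq_one_dvd:
  assumes "primitive_root m w" "0 < m" "w ^ r = 1"
  shows "m dvd r"
proof -
  have "w ^ r = (w ^ m) ^ (r div m) * w ^ (r mod m)"
    by (metis div_mult_mod_eq mult.commute power_add power_mult)
  then have "w ^ (r mod m) = 1"
    using assms(1,3) by (simp add: primitive_root_def)
  moreover have "r mod m < m" using assms(2) by simp
  ultimately have "r mod m = 0"
    using assms(1) unfolding primitive_root_def by (metis bot_nat_0.not_eq_extremum)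
  then show ?thesis by (simp add: mod_eq_0_iff_dvd)
qed

(* If N a = k L then N / gcd k N divides L, as N / gcd and k / gcd are coprime. *)
lemma div_gcd_dvd_of_mult_eq:
  fixes N k a L :: nat
  assumes "0 < N" "N * a = k * L"
  shows "N div gcd k N dvd L"
proof -
  define m where "m = gcd k N"
  have "0 < m" using assms(1) by (simp add: m_def)
  have N: "N = N div m * m" and k: "k = k div m * m" by (simp_all add: m_def)
  have "coprime (k div m) (N div m)"
    unfolding m_def using div_gcd_coprime assms(1) by blast
  moreover have "(N div m * a) * m = (k div m * L) * m"
    using assms(2) N k by (metis mult.commute mult.left_commute)
  then have "N div m * a = k div m * L" using \<open>0 < m\<close> by simp
  ultimately show ?thesis
    by (metis coprime_commute coprime_dvd_mult_right_iff dvd_triv_left m_def)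
qed

lemma spec_root_dvd:
  fixes \<omega> \<omega>\<^sub>1 :: complex
  assumes "0 < N" "primitive_root (gcd k N) \<omega>" "\<omega>\<^sub>1 ^ (N div gcd k N) = \<omega>"
    and "N * a = k * L" "\<omega>\<^sub>1 ^ L = 1"
  shows "N dvd L"
proof -
  obtain r where r: "L = N div gcd k N * r"
    using div_gcd_dvd_of_mult_eq[OF assms(1,4)] by blast
  have "\<omega> ^ r = 1" using assms(3,5) r by (simp add: power_mult)
  then have "gcd k N dvd r"
    using primitive_root_pow_eq_one_dvd[OF assms(2)] assms(1) by simp
  then show ?thesis using r by (metis dvd_div_mult_self gcd_dvd2 mult_dvd_mono dvd_refl)
qed

lemma spec_root_pow_N:
  fixes \<omega> \<omega>\<^sub>1 :: complex
  assumes "primitive_root (gcd k N) \<omega>" "\<omega>\<^sub>1 ^ (N div gcd k N) = \<omega>"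
  shows "\<omega>\<^sub>1 ^ N = 1"
proof -
  have "\<omega>\<^sub>1 ^ N = \<omega> ^ gcd k N"
    using assms(2) by (metis gcd_dvd2 dvd_div_mult_self power_mult)
  then show ?thesis using assms(1) by (simp add: primitive_root_def)
qed

lemma partition_nth_antimono:
  assumes "is_partition lam" "i \<le> j" "j < length lam"
  shows "lam ! j \<le> lam ! i"
  using assms sorted_wrt_nth_less[of "(\<ge>)" lam i j]
  unfolding is_partition_def by (cases "i = j") auto

lemma part_le_first:
  assumes "is_partition lam" "1 \<le> i"
  shows "part lam i \<le> part lam 1"
  using assms partition_nth_antimono[OF assms(1), of 0 "i - 1"] by (auto simp: part_def)

lemma diagram_finite: "finite (diagram lam)"
proof (rule finite_subset)
  show "diagram lam \<subseteq> {..length lam} \<times> {..sum_list lam}"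
  proof
    fix s assume "s \<in> diagram lam"
    then obtain i j where s: "s = (i, j)" "1 \<le> i" "1 \<le> j" "j \<le> part lam i"
      by (auto simp: diagram_def)
    then have "i \<le> length lam" by (auto simp: part_def split: if_splits)
    moreover have "part lam i \<le> sum_list lam"
      by (auto simp: part_def member_le_sum_list)
    ultimately show "s \<in> {..length lam} \<times> {..sum_list lam}" using s by auto
  qed
qed simp

lemma conjpart_le_length: "conjpart lam j \<le> length lam"
  by (simp add: conjpart_def)

lemma box_row_le_conjpart:
  assumes "is_partition lam" "(i, j) \<in> diagram lam"
  shows "i \<le> conjpart lam j"
proof -
  from assms(2) have ij: "1 \<le> i" "1 \<le> j" "j \<le> part lam i" by (auto simp: diagram_def)
  then have il: "i \<le> length lam" by (auto simp: part_def split: if_splits)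
  have "\<forall>x\<in>set (take i lam). j \<le> x"
  proof
    fix x assume "x \<in> set (take i lam)"
    then obtain p where p: "p < i" "x = lam ! p" using il by (auto simp: in_set_conv_nth)
    have "lam ! (i - 1) \<le> lam ! p"
      using partition_nth_antimono[OF assms(1), of p "i - 1"] p il by auto
    then show "j \<le> x" using ij il p by (simp add: part_def)
  qed
  then have "i = length (filter (\<lambda>x. j \<le> x) (take i lam))"
    using il by simp
  also have "\<dots> \<le> length (filter (\<lambda>x. j \<le> x) lam)"
    by (metis append_take_drop_id filter_append le_add1 length_append)
  finally show ?thesis by (simp add: conjpart_def)
qed

lemma leg_add_row:
  assumes "is_partition lam" "s \<in> diagram lam"
  shows "leg lam s + fst s = conjpart lam (snd s)"
  using box_row_le_conjpart[OF assms(1), of "fst s" "snd s"] assms(2)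
  by (simp add: leg_def)

lemma diagram_row_pos: "s \<in> diagram lam \<Longrightarrow> 1 \<le> fst s"
  by (auto simp: diagram_def)

lemma conjpart_eq_iff:
  assumes "is_partition lam" "length lam \<le> N" "0 < N" "1 \<le> j"
  shows "conjpart lam j = N \<longleftrightarrow> j \<le> part lam N"
proof
  assume "conjpart lam j = N"
  then have len: "length (filter (\<lambda>x. j \<le> x) lam) = length lam" "length lam = N"
    using assms(2) conjpart_le_length[of lam j] by (simp_all add: conjpart_def)
  then have "\<forall>x\<in>set lam. j \<le> x" by (metis length_filter_less less_irrefl)
  then show "j \<le> part lam N" using len(2) assms(3) by (simp add: part_def)
next
  assume h: "j \<le> part lam N"
  then have NL: "length lam = N" using assms(2,4) by (auto simp: part_def split: if_splits)
  have "\<forall>x\<in>set lam. j \<le> x"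
  proof
    fix x assume "x \<in> set lam"
    then obtain p where p: "p < length lam" "x = lam ! p" by (auto simp: in_set_conv_nth)
    have "lam ! (N - 1) \<le> lam ! p"
      using partition_nth_antimono[OF assms(1), of p "N - 1"] p NL by auto
    then show "j \<le> x" using h NL assms(3) p by (auto simp: part_def)
  qed
  then show "conjpart lam j = N" using NL by (simp add: conjpart_def)
qed

lemma length_ptrans: "length (ptrans lam) = part lam 1"
  by (simp add: ptrans_def)

lemma bar_first_part:
  assumes "is_partition lam" "0 < N"
  shows "part (bar N lam) 1 = part lam 1 - part lam N"
proof (cases "N = 1")
  case True then show ?thesis by (simp add: bar_def part_def)
next
  case False
  let ?rest = "filter (\<lambda>x. x \<noteq> 0) (map (\<lambda>i. part lam i - part lam N) [2..<N])"
  have "[1..<N] = 1 # [2..<N]" using False assms(2) by (simp add: upt_conv_Cons numeral_2_eq_2)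
  then have bar: "bar N lam = filter (\<lambda>x. x \<noteq> 0) [part lam 1 - part lam N] @ ?rest"
    by (simp add: bar_def)
  show ?thesis
  proof (cases "part lam 1 - part lam N = 0")
    case True
    have "part lam i - part lam N = 0" if "2 \<le> i" for i
      using part_le_first[OF assms(1), of i] True that by simp
    then have "?rest = []" by (simp add: filter_empty_conv)
    then show ?thesis using bar True by (simp add: part_def)
  next
    case False then show ?thesis using bar by (simp add: part_def)
  qed
qed

(* No factor of c'_lambda vanishes at q^k t^N = 1: it would need a leg divisible by N. *)
lemma c'_factor_nonzero:
  fixes \<omega> \<omega>\<^sub>1 :: complex
  assumes "0 < N" "primitive_root (gcd k N) \<omega>" "\<omega>\<^sub>1 ^ (N div gcd k N) = \<omega>"
    and "is_partition lam" "length lam \<le> N" "s \<in> diagram lam"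
  shows "1 - specQ N ^ (arm lam s + 1) * specT k \<omega>\<^sub>1 ^ leg lam s \<noteq> 0"
proof
  assume "1 - specQ N ^ (arm lam s + 1) * specT k \<omega>\<^sub>1 ^ leg lam s = 0"
  then have e: "N * (arm lam s + 1) = k * leg lam s" "\<omega>\<^sub>1 ^ leg lam s = 1"
    using spec_factor_eq_zero_iff[of N "arm lam s + 1" k \<omega>\<^sub>1 "leg lam s"] by blast+
  have "leg lam s < N"
    using leg_add_row[OF assms(4,6)] diagram_row_pos[OF assms(6)]
      conjpart_le_length[of lam "snd s"] assms(5) by linarith
  with spec_root_dvd[OF assms(1-3) e] have "leg lam s = 0"
    using dvd_imp_le by (cases "leg lam s") auto
  then show False using e(1) assms(1) by simp
qed

lemma c_factor_eq_zero_iff: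
  fixes \<omega> \<omega>\<^sub>1 :: complex
  assumes "0 < N" "primitive_root (gcd k N) \<omega>" "\<omega>\<^sub>1 ^ (N div gcd k N) = \<omega>"
    and "is_partition lam" "length lam \<le> N" "s \<in> diagram lam"
  shows "1 - specQ N ^ arm lam s * specT k \<omega>\<^sub>1 ^ (leg lam s + 1) = 0 \<longleftrightarrow>
    fst s = 1 \<and> arm lam s = k \<and> conjpart lam (snd s) = N"
proof -
  have col: "leg lam s + fst s = conjpart lam (snd s)" "1 \<le> fst s"
    "conjpart lam (snd s) \<le> N"
    using leg_add_row[OF assms(4,6)] diagram_row_pos[OF assms(6)]
      conjpart_le_length[of lam "snd s"] assms(5) by simp_all
  show ?thesis
  proof
    assume "1 - specQ N ^ arm lam s * specT k \<omega>\<^sub>1 ^ (leg lam s + 1) = 0"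
    then have e: "N * arm lam s = k * (leg lam s + 1)" "\<omega>\<^sub>1 ^ (leg lam s + 1) = 1"
      using spec_factor_eq_zero_iff[of N "arm lam s" k \<omega>\<^sub>1 "leg lam s + 1"] by blast+
    have "N \<le> leg lam s + 1" using spec_root_dvd[OF assms(1-3) e] by (simp add: dvd_imp_le)
    then have "leg lam s + 1 = N" "fst s = 1" "conjpart lam (snd s) = N" using col by linarith+
    moreover have "N * arm lam s = N * k"
      using e(1) \<open>leg lam s + 1 = N\<close> by (metis mult.commute)
    then have "arm lam s = k" using assms(1) by simp
    ultimately show "fst s = 1 \<and> arm lam s = k \<and> conjpart lam (snd s) = N" by simp
  next
    assume h: "fst s = 1 \<and> arm lam s = k \<and> conjpart lam (snd s) = N"
    then have "leg lam s + 1 = N" using col(1) by simp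
    then show "1 - specQ N ^ arm lam s * specT k \<omega>\<^sub>1 ^ (leg lam s + 1) = 0"
      using h spec_root_pow_N[OF assms(2,3)]
        spec_factor_eq_zero_iff[of N "arm lam s" k \<omega>\<^sub>1 "leg lam s + 1"] by simp
  qed
qed

lemma first_row_full_column_boxes:
  assumes "is_partition lam" "length lam \<le> N" "0 < N"
  shows "{s \<in> diagram lam. fst s = 1 \<and> arm lam s = k \<and> conjpart lam (snd s) = N}
    = (if k < part lam 1 \<and> part lam 1 - k \<le> part lam N then {(1, part lam 1 - k)} else {})"
  using conjpart_eq_iff[OF assms]
  by (auto simp: diagram_def arm_def)

theorem lemma2p3:
  fixes N k :: nat and lam :: "nat list" and \<omega> \<omega>\<^sub>1 :: complex
  assumes "0 < N" and "0 < k"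
    and "is_partition lam" and "length lam \<le> N"
    and "primitive_root (gcd k N) \<omega>" and "\<omega>\<^sub>1 ^ (N div gcd k N) = \<omega>"
  shows "c'_lam lam (specQ N) (specT k \<omega>\<^sub>1) \<noteq> 0
    \<and> (c_lam lam (specQ N) (specT k \<omega>\<^sub>1) = 0 \<longleftrightarrow>
           length (ptrans lam) > k \<and> length (ptrans (bar N lam)) \<le> k)
    \<and> (c_lam lam (specQ N) (specT k \<omega>\<^sub>1) = 0 \<longrightarrow>
           card {s \<in> diagram lam.
             1 - specQ N ^ arm lam s * specT k \<omega>\<^sub>1 ^ (leg lam s + 1) = 0} = 1)"
proof -
  let ?Z = "{s \<in> diagram lam. 1 - specQ N ^ arm lam s * specT k \<omega>\<^sub>1 ^ (leg lam s + 1) = 0}"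
  have c': "c'_lam lam (specQ N) (specT k \<omega>\<^sub>1) \<noteq> 0"
    unfolding c'_lam_def using c'_factor_nonzero[OF assms(1,5,6,3,4)]
    by (simp add: prod_zero_iff[OF diagram_finite])
  have c_zero: "c_lam lam (specQ N) (specT k \<omega>\<^sub>1) = 0 \<longleftrightarrow> ?Z \<noteq> {}"
    unfolding c_lam_def by (auto simp: prod_zero_iff[OF diagram_finite])
  have "?Z = {s \<in> diagram lam. fst s = 1 \<and> arm lam s = k \<and> conjpart lam (snd s) = N}"
    using c_factor_eq_zero_iff[OF assms(1,5,6,3,4)] by blast
  then have Z: "?Z = (if k < part lam 1 \<and> part lam 1 - k \<le> part lam N
                     then {(1, part lam 1 - k)} else {})"
    using first_row_full_column_boxes[OF assms(3,4,1)] by simp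
  have "length (ptrans lam) = part lam 1"
    and "length (ptrans (bar N lam)) = part lam 1 - part lam N"
    using bar_first_part[OF assms(3,1)] by (simp_all only: length_ptrans)
  then show ?thesis unfolding c_zero Z using c' by auto
qed

end
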